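(* Let $F_1$ and $F_2$ be finite fields with $|F_1|\le |F_2|$. Then there exists an $|F_1|\times|F_2|$ Latin-sum array (with $A=F_1$, $B=F_2$) over an alphabet $C$ with $$|C|=\begin{cases}4, & F_1=F_2=\mathbb{Z}_3,\\ |F_2|, & \text{otherwise}.\end{cases}$$
   Context: Let $F_1,F_2$ be finite fields with $|F_1|\le|F_2|$, and let $A\subseteq F_1$, $B\subseteq F_2$ with $|A|\le|B|$. A table $L$ of size $|A|\times|B|$ with entries from a set $C$, whose rows are indexed by the elements of $A$ and columns by the elements of $B$ (entry $L_{x,y}$ for $x\in A,y\in B$), is called a Latin-sum array over $C$ if for every two distinct pairs $(x_1,y_1),(x_2,y_2)\in A\times B$: (i) if $x_1+x_2=0$ in $F_1$ then $L_{x_1,y_1}\ne L_{x_2,y_2}$; and (ii) if $y_1+y_2=0$ in $F_2$ then $L_{x_1,y_1}\ne L_{x_2,y_2}$. *)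

theory Defs
  imports Main
begin

definition latin_sum_array ::
  "'a::field set \<Rightarrow> 'b::field set \<Rightarrow> 'c set \<Rightarrow> ('a \<Rightarrow> 'b \<Rightarrow> 'c) \<Rightarrow> bool" where
  "latin_sum_array A B C L \<longleftrightarrow>
     (\<forall>x\<in>A. \<forall>y\<in>B. L x y \<in> C) \<and>
     (\<forall>x1\<in>A. \<forall>y1\<in>B. \<forall>x2\<in>A. \<forall>y2\<in>B. (x1, y1) \<noteq> (x2, y2) \<longrightarrow>
        (x1 + x2 = 0 \<longrightarrow> L x1 y1 \<noteq> L x2 y2) \<and>
        (y1 + y2 = 0 \<longrightarrow> L x1 y1 \<noteq> L x2 y2))"

end

theory Submission
  imports Defs "HOL-Library.Cardinality"
begin

(* The conditions on a Latin-sum array only involve the involutions x \<mapsto> -x of the two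
   fields, so it suffices to build arrays on small integer models of these involutions and
   pull them back along injections that commute with negation.
   In characteristic 2 negation is the identity, and |F| is even because x \<mapsto> x + 1 pairs up
   the elements.  In odd characteristic 0 is the only self-inverse element, so |F| = 2t + 1 and
   F embeds into {-t..t} with negation going to negation.
   Each combination of characteristics has an explicit array with |F2| colours: a cyclic Latin
   square; rows permuting the colours by a transposition or a 3-cycle; rows i and -i taking even
   and odd colours; rows taking colours of their own sign.  The last construction needs a
   fixed-point-free shift of {1..k}, hence k \<ge> 2, which fails exactly for F1 = F2 = Z3; there a
   3 \<times> 3 array with 4 colours does the job. *)

section \<open>Latin arrays with respect to involutions\<close>

definition latin_array ::
  "('a \<Rightarrow> 'a) \<Rightarrow> ('b \<Rightarrow> 'b) \<Rightarrow> 'a set \<Rightarrow> 'b set \<Rightarrow> 'c set \<Rightarrow> ('a \<Rightarrow> 'b \<Rightarrow> 'c) \<Rightarrow> bool"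
  where
  "latin_array \<sigma> \<tau> A B C L \<longleftrightarrow>
     (\<forall>x\<in>A. \<forall>y\<in>B. L x y \<in> C) \<and>
     (\<forall>x1\<in>A. \<forall>y1\<in>B. \<forall>x2\<in>A. \<forall>y2\<in>B. (x1, y1) \<noteq> (x2, y2) \<longrightarrow>
        (x2 = \<sigma> x1 \<or> y2 = \<tau> y1) \<longrightarrow> L x1 y1 \<noteq> L x2 y2)"

lemma latin_arrayI:
  assumes "\<And>x y. x \<in> A \<Longrightarrow> y \<in> B \<Longrightarrow> L x y \<in> C"
    and "\<And>x y1 y2. x \<in> A \<Longrightarrow> \<sigma> x \<in> A \<Longrightarrow> y1 \<in> B \<Longrightarrow> y2 \<in> B \<Longrightarrow>
           (x, y1) \<noteq> (\<sigma> x, y2) \<Longrightarrow> L x y1 \<noteq> L (\<sigma> x) y2"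
    and "\<And>x1 x2 y. x1 \<in> A \<Longrightarrow> x2 \<in> A \<Longrightarrow> y \<in> B \<Longrightarrow> \<tau> y \<in> B \<Longrightarrow>
           (x1, y) \<noteq> (x2, \<tau> y) \<Longrightarrow> L x1 y \<noteq> L x2 (\<tau> y)"
  shows "latin_array \<sigma> \<tau> A B C L"
  using assms unfolding latin_array_def by blast

lemma latin_arrayD:
  assumes "latin_array \<sigma> \<tau> A B C L"
  shows latin_array_mem: "\<lbrakk>x \<in> A; y \<in> B\<rbrakk> \<Longrightarrow> L x y \<in> C"
    and latin_array_distinct: "\<lbrakk>x1 \<in> A; y1 \<in> B; x2 \<in> A; y2 \<in> B; (x1, y1) \<noteq> (x2, y2);
           x2 = \<sigma> x1 \<or> y2 = \<tau> y1\<rbrakk> \<Longrightarrow> L x1 y1 \<noteq> L x2 y2"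
  using assms unfolding latin_array_def by blast+

lemma latin_sum_array_iff_latin_array:
  "latin_sum_array A B C L \<longleftrightarrow> latin_array uminus uminus A B C L"
  unfolding latin_sum_array_def latin_array_def by (simp add: add_eq_0_iff)

lemma latin_array_pullback:
  assumes L: "latin_array \<sigma> \<tau> A B C L"
    and \<alpha>: "inj_on \<alpha> A'" "\<alpha> ` A' \<subseteq> A" "\<And>x. x \<in> A' \<Longrightarrow> \<alpha> (\<sigma>' x) = \<sigma> (\<alpha> x)"
    and \<beta>: "inj_on \<beta> B'" "\<beta> ` B' \<subseteq> B" "\<And>y. y \<in> B' \<Longrightarrow> \<beta> (\<tau>' y) = \<tau> (\<beta> y)"
  shows "latin_array \<sigma>' \<tau>' A' B' C (\<lambda>x y. L (\<alpha> x) (\<beta> y))"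
  unfolding latin_array_def
proof (intro conjI ballI impI)
  fix x y assume "x \<in> A'" "y \<in> B'"
  then show "L (\<alpha> x) (\<beta> y) \<in> C" using \<alpha>(2) \<beta>(2) by (intro latin_array_mem[OF L]) auto
next
  fix x1 y1 x2 y2
  assume in_dom: "x1 \<in> A'" "y1 \<in> B'" "x2 \<in> A'" "y2 \<in> B'"
    and ne: "(x1, y1) \<noteq> (x2, y2)" and linked: "x2 = \<sigma>' x1 \<or> y2 = \<tau>' y1"
  have "(\<alpha> x1, \<beta> y1) \<noteq> (\<alpha> x2, \<beta> y2)"
    using ne in_dom by (simp add: inj_on_eq_iff[OF \<alpha>(1)] inj_on_eq_iff[OF \<beta>(1)])
  moreover have "\<alpha> x2 = \<sigma> (\<alpha> x1) \<or> \<beta> y2 = \<tau> (\<beta> y1)"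
    using linked in_dom \<alpha>(3) \<beta>(3) by blast
  ultimately show "L (\<alpha> x1) (\<beta> y1) \<noteq> L (\<alpha> x2) (\<beta> y2)"
    using in_dom \<alpha>(2) \<beta>(2) by (intro latin_array_distinct[OF L]) auto
qed

lemma latin_array_recolour:
  assumes L: "latin_array \<sigma> \<tau> A B C L" and f: "inj_on f C"
  shows "latin_array \<sigma> \<tau> A B (f ` C) (\<lambda>x y. f (L x y))"
proof (rule latin_arrayI)
  fix x y assume "x \<in> A" "y \<in> B"
  then show "f (L x y) \<in> f ` C" by (simp add: latin_array_mem[OF L])
next
  fix x y1 y2 assume "x \<in> A" "\<sigma> x \<in> A" "y1 \<in> B" "y2 \<in> B" "(x, y1) \<noteq> (\<sigma> x, y2)"
  then show "f (L x y1) \<noteq> f (L (\<sigma> x) y2)"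
    by (simp add: inj_on_eq_iff[OF f] latin_array_mem[OF L] latin_array_distinct[OF L])
next
  fix x1 x2 y assume "x1 \<in> A" "x2 \<in> A" "y \<in> B" "\<tau> y \<in> B" "(x1, y) \<noteq> (x2, \<tau> y)"
  then show "f (L x1 y) \<noteq> f (L x2 (\<tau> y))"
    by (simp add: inj_on_eq_iff[OF f] latin_array_mem[OF L] latin_array_distinct[OF L])
qed

definition latin_sum_colourable :: "'a::field set \<Rightarrow> 'b::field set \<Rightarrow> nat \<Rightarrow> bool" where
  "latin_sum_colourable A B c \<longleftrightarrow>
     (\<exists>(C::nat set) L. finite C \<and> card C = c \<and> latin_sum_array A B C L)"

lemma latin_sum_colourable_via_embeddings:
  fixes \<alpha> :: "'a::field \<Rightarrow> 'i" and \<beta> :: "'b::field \<Rightarrow> 'j"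
  assumes L: "latin_array \<sigma> \<tau> I J C L" "finite C" "card C = c"
    and \<alpha>: "inj \<alpha>" "range \<alpha> \<subseteq> I" "\<And>x. \<alpha> (- x) = \<sigma> (\<alpha> x)"
    and \<beta>: "inj \<beta>" "range \<beta> \<subseteq> J" "\<And>y. \<beta> (- y) = \<tau> (\<beta> y)"
  shows "latin_sum_colourable (UNIV::'a set) (UNIV::'b set) c"
proof -
  obtain f where f: "bij_betw f C {0..<card C}"
    using ex_bij_betw_finite_nat[OF L(2)] by blast
  have "latin_array uminus uminus UNIV UNIV C (\<lambda>x y. L (\<alpha> x) (\<beta> y))"
    by (rule latin_array_pullback[OF L(1) \<alpha>(1,2) _ \<beta>(1,2)]) (simp_all add: \<alpha>(3) \<beta>(3))
  then have "latin_array uminus uminus UNIV UNIV (f ` C) (\<lambda>x y. f (L (\<alpha> x) (\<beta> y)))"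
    using bij_betw_imp_inj_on[OF f] by (rule latin_array_recolour)
  moreover have "f ` C = {0..<card C}" using f by (simp add: bij_betw_def)
  ultimately show ?thesis
    unfolding latin_sum_colourable_def latin_sum_array_iff_latin_array
    by (intro exI[of _ "{0..<card C}"]) (auto simp: L(3))
qed

section \<open>Negation in finite fields\<close>

lemma card_involution:
  fixes \<sigma> :: "'a::finite \<Rightarrow> 'a"
  assumes involution: "\<And>x. \<sigma> (\<sigma> x) = x"
  obtains P where "\<And>x. x \<in> P \<Longrightarrow> \<sigma> x \<notin> P" "\<And>x. \<sigma> x \<noteq> x \<Longrightarrow> x \<in> P \<or> \<sigma> x \<in> P"
    "CARD('a) = card {x. \<sigma> x = x} + 2 * card P"
proof -
  obtain h :: "'a \<Rightarrow> nat" where h: "inj h"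
    using finite_imp_inj_to_nat_seg[of "UNIV::'a set"] by auto
  define P where "P = {x. h x < h (\<sigma> x)}"
  have P_disj: "\<sigma> x \<notin> P" if "x \<in> P" for x
    using that involution unfolding P_def by auto
  have P_cover: "x \<in> P \<or> \<sigma> x \<in> P" if "\<sigma> x \<noteq> x" for x
  proof -
    have "h x \<noteq> h (\<sigma> x)" using that injD[OF h] by metis
    then show ?thesis using involution unfolding P_def by auto
  qed
  define F where "F = {x. \<sigma> x = x}"
  have UNIV_split: "UNIV = F \<union> (P \<union> \<sigma> ` P)"
  proof (intro equalityI subsetI)
    fix x
    show "x \<in> F \<union> (P \<union> \<sigma> ` P)"
    proof (cases "\<sigma> x = x")
      case False
      then have "x \<in> P \<or> \<sigma> x \<in> P" by (rule P_cover)
      then show ?thesis using involution by (metis UnI2 Un_iff image_eqI)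
    qed (simp add: F_def)
  qed simp
  have disj: "F \<inter> (P \<union> \<sigma> ` P) = {}" "P \<inter> \<sigma> ` P = {}"
    using P_disj involution unfolding F_def by force+
  have "inj_on \<sigma> P" by (metis involution inj_onI)
  have "CARD('a) = card F + (card P + card (\<sigma> ` P))"
    using disj by (subst UNIV_split) (simp add: card_Un_disjoint)
  also have "card (\<sigma> ` P) = card P" by (rule card_image) fact
  finally have "CARD('a) = card F + 2 * card P" by simp
  then show thesis using that P_disj P_cover unfolding F_def by blast
qed

lemma two_le_card_UNIV: "2 \<le> CARD('a::{finite,zero_neq_one})"
proof -
  have "card {0::'a, 1} \<le> CARD('a)" by (rule card_mono) auto
  then show ?thesis by simp
qed

lemma uminus_eq_self_if_two_eq_zero:
  fixes x :: "'a::ring_1"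
  assumes "(2::'a) = 0"
  shows "- x = x"
proof -
  have "x + x = 0" using assms by (metis mult_2 mult_zero_left)
  then show ?thesis by (metis add_eq_0_iff)
qed

lemma even_card_if_two_eq_zero:
  assumes "(2::'a::{finite,ring_1}) = 0"
  shows "even (CARD('a))"
proof -
  have shift_twice: "x + 1 + 1 = x" for x :: 'a
    using assms by (simp add: add.assoc)
  obtain P :: "'a set" where "CARD('a) = card {x::'a. x + 1 = x} + 2 * card P"
    by (rule card_involution[of "\<lambda>x. x + 1", OF shift_twice]) (rule that)
  then show ?thesis by simp
qed

lemma self_inverse_eq_zero:
  fixes x :: "'a::idom"
  assumes "(2::'a) \<noteq> 0" "- x = x"
  shows "x = 0"
proof -
  have "2 * x = 0" using assms(2) by (metis add_eq_0_iff mult_2)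
  then show ?thesis using assms(1) by simp
qed

lemma symmetric_int_embedding:
  assumes self_inverse: "\<And>x::'a::{finite,group_add}. - x = x \<Longrightarrow> x = 0"
  obtains t :: nat and \<alpha> :: "'a::{finite,group_add} \<Rightarrow> int"
  where "CARD('a) = 2 * t + 1" "inj \<alpha>" "range \<alpha> \<subseteq> {- int t..int t}" "\<And>x. \<alpha> (- x) = - \<alpha> x"
proof -
  obtain P :: "'a set" where P_disj: "\<And>x. x \<in> P \<Longrightarrow> - x \<notin> P"
    and P_cover: "\<And>x. - x \<noteq> x \<Longrightarrow> x \<in> P \<or> - x \<in> P"
    and card: "CARD('a) = card {x::'a. - x = x} + 2 * card P"
    by (rule card_involution[of "uminus :: 'a \<Rightarrow> 'a", OF minus_minus]) (rule that)
  have P_nonzero: "x \<in> P \<Longrightarrow> x \<noteq> 0" for x using P_disj by fastforce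
  have P_iff: "x \<in> P \<longleftrightarrow> - x \<notin> P" if "x \<noteq> 0" for x
    using that P_disj P_cover self_inverse by blast
  have "{x. - x = x} = {0::'a}" using self_inverse by auto
  with card have card_eq: "CARD('a) = 2 * card P + 1" by simp
  define t where "t = card P"
  obtain g where g: "bij_betw g P {0..<t}"
    using ex_bij_betw_finite_nat[of P] unfolding t_def by auto
  define \<alpha> where "\<alpha> x = (if x \<in> P then int (g x) + 1 else if - x \<in> P then - (int (g (- x)) + 1) else 0)"
    for x
  have \<alpha>_minus: "\<alpha> (- x) = - \<alpha> x" for x
    using P_iff[of x] P_nonzero[of x] unfolding \<alpha>_def by auto
  have g_lt: "x \<in> P \<Longrightarrow> g x < t" for x using g by (auto simp: bij_betw_def)
  have \<alpha>_pos: "0 < \<alpha> x \<longleftrightarrow> x \<in> P" for x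
    unfolding \<alpha>_def by auto
  have \<alpha>_zero: "\<alpha> x = 0 \<longleftrightarrow> x = 0" for x
    using \<alpha>_pos[of x] \<alpha>_pos[of "- x"] \<alpha>_minus[of x] P_iff[of x] by force
  have "inj \<alpha>"
  proof (rule injI)
    have P_case: "x \<in> P \<Longrightarrow> \<alpha> x = \<alpha> y \<Longrightarrow> x = y" for x y
      using \<alpha>_pos[of x] \<alpha>_pos[of y] g unfolding bij_betw_def inj_on_def \<alpha>_def by auto
    fix x y assume eq: "\<alpha> x = \<alpha> y"
    consider "x \<in> P" | "- x \<in> P" | "x = 0" using P_iff[of x] by blast
    then show "x = y"
    proof cases
      case 2 then show ?thesis using P_case[of "- x" "- y"] eq \<alpha>_minus by simp
    next
      case 3 then show ?thesis using eq \<alpha>_zero by metis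
    qed (use P_case eq in blast)
  qed
  moreover have "range \<alpha> \<subseteq> {- int t..int t}"
    using g_lt unfolding \<alpha>_def by (force simp: of_nat_less_iff)
  ultimately show thesis using that card_eq \<alpha>_minus unfolding t_def by blast
qed

lemma odd_char_embedding:
  assumes "(2::'a::{finite,field}) \<noteq> 0"
  obtains t :: nat and \<alpha> :: "'a::{finite,field} \<Rightarrow> int"
  where "CARD('a) = 2 * t + 1" "inj \<alpha>" "range \<alpha> \<subseteq> {- int t..int t}" "\<And>x. \<alpha> (- x) = - \<alpha> x"
  by (rule symmetric_int_embedding) (erule self_inverse_eq_zero[OF assms], rule that)

section \<open>Arrays on integer intervals\<close>

lemma mod_add_left_cancel_int:
  fixes q a b h :: int
  assumes "(q + a) mod h = (q + b) mod h" "0 \<le> a" "a < h" "0 \<le> b" "b < h"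
  shows "a = b"
proof -
  have "h dvd a - b" using assms(1) by (simp add: mod_eq_dvd_iff)
  then show ?thesis using assms(2-) by (smt (verit) dvd_imp_le_int)
qed

lemma latin_array_cyclic:
  fixes n :: int
  assumes "0 < n"
  shows "latin_array id id {0..<n} {0..<n} {0..<n} (\<lambda>i j. (i + j) mod n)"
proof (rule latin_arrayI)
  fix i j :: int
  show "(i + j) mod n \<in> {0..<n}" using assms by simp
next
  fix i j1 j2 :: int assume j: "j1 \<in> {0..<n}" "j2 \<in> {0..<n}" and ne: "(i, j1) \<noteq> (id i, j2)"
  show "(i + j1) mod n \<noteq> (id i + j2) mod n"
  proof
    assume "(i + j1) mod n = (id i + j2) mod n"
    then have "j1 = j2"
      using j mod_add_left_cancel_int[where q = i and a = j1 and b = j2 and h = n] by simp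
    then show False using ne by simp
  qed
next
  fix i1 i2 j :: int assume i: "i1 \<in> {0..<n}" "i2 \<in> {0..<n}" and ne: "(i1, j) \<noteq> (i2, id j)"
  show "(i1 + j) mod n \<noteq> (i2 + id j) mod n"
  proof
    assume "(i1 + j) mod n = (i2 + id j) mod n"
    then have "i1 = i2"
      using i mod_add_left_cancel_int[where q = j and a = i1 and b = i2 and h = n]
      by (simp add: add.commute)
    then show False using ne by simp
  qed
qed

(* Row a is the permutation of colours (0 a) if a \<ge> 0 and the 3-cycle 0 \<mapsto> a \<mapsto> 1 \<mapsto> 0 if a < 0,
   so a column j > 0 only receives the colours j and 0, a column j < 0 only j and 1.  Row -1 is
   left out: it would put colour 1, which occurs in column 1, into column -1. *)
definition cycle_array :: "int \<Rightarrow> int \<Rightarrow> int" where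
  "cycle_array a j =
     (if j = 0 then a else if j = a then (if 0 \<le> a then 0 else 1)
      else if j = 1 \<and> a < 0 then 0 else j)"

lemma latin_array_cycle_array:
  fixes k :: int
  assumes "1 \<le> k"
  shows "latin_array id uminus ({-k..k} - {-1}) {-k..k} {-k..k} cycle_array"
  using assms by (intro latin_arrayI) (auto simp: cycle_array_def)

(* Rows i > 0 use even and rows i < 0 odd colours; in column j the row \<plusminus>i carries the digit
   (j div 2 + |i|) mod h, and these differ for the different values 0 \<le> |i| < h. *)
definition parity_array :: "int \<Rightarrow> int \<Rightarrow> int \<Rightarrow> int" where
  "parity_array h i j =
     (if i = 0 then j else 2 * ((j div 2 + \<bar>i\<bar>) mod h) + (if i < 0 then 1 else 0))"

lemma latin_array_parity_array:
  fixes h :: int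
  assumes "0 < h"
  shows "latin_array uminus id {-h<..<h} {0..<2 * h} {0..<2 * h} (parity_array h)"
proof (rule latin_arrayI)
  fix i j :: int assume "j \<in> {0..<2 * h}"
  moreover have "0 \<le> x mod h" "2 * (x mod h) + 1 < 2 * h" for x
  proof -
    have "x mod h < h" using assms by simp
    then show "2 * (x mod h) + 1 < 2 * h" by linarith
  qed (use assms in simp)
  ultimately show "parity_array h i j \<in> {0..<2 * h}"
    using assms unfolding parity_array_def by auto
next
  fix i j1 j2 :: int assume "(i, j1) \<noteq> (- i, j2)"
  moreover have "2 * a \<noteq> 2 * b + 1" "2 * b + 1 \<noteq> 2 * a" for a b :: int by presburger+
  ultimately show "parity_array h i j1 \<noteq> parity_array h (- i) j2"
    unfolding parity_array_def by auto
next
  fix i1 i2 j :: int assume i: "i1 \<in> {-h<..<h}" "i2 \<in> {-h<..<h}" "(i1, j) \<noteq> (i2, id j)"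
    and j: "j \<in> {0..<2 * h}"
  define q where "q = j div 2"
  define b where "b i = (if i = 0 then j mod 2 else if i < 0 then 1 else 0)" for i :: int
  have q: "0 \<le> q" "q < h" using j unfolding q_def by auto
  have uniform: "parity_array h i j = 2 * ((q + \<bar>i\<bar>) mod h) + b i" for i
  proof (cases "i = 0")
    case True
    have "q mod h = q" using q by simp
    then show ?thesis using True unfolding parity_array_def q_def b_def by simp
  qed (simp add: parity_array_def q_def b_def)
  have b01: "b i \<in> {0, 1}" for i unfolding b_def by auto
  have digits: "x = y \<and> c = d" if "2 * x + c = 2 * y + d" "c \<in> {0, 1}" "d \<in> {0, 1}"
    for x y c d :: int using that by auto presburger+
  show "parity_array h i1 j \<noteq> parity_array h i2 (id j)"
  proof
    assume "parity_array h i1 j = parity_array h i2 (id j)"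
    then have "(q + \<bar>i1\<bar>) mod h = (q + \<bar>i2\<bar>) mod h \<and> b i1 = b i2"
      by (intro digits[OF _ b01 b01]) (simp add: uniform)
    then have "\<bar>i1\<bar> = \<bar>i2\<bar>" "b i1 = b i2"
      using mod_add_left_cancel_int[where q = q and a = "\<bar>i1\<bar>" and b = "\<bar>i2\<bar>" and h = h] i
      by auto
    moreover have "i1 \<noteq> i2" using i by simp
    ultimately show False unfolding b_def by (auto split: if_splits)
  qed
qed

(* Row i \<noteq> 0 only uses colours of the sign of i; column j \<noteq> 0 only the colours j and
   -sgn j * s(|j|), where s(a) = a mod k + 1 is a cyclic shift of {1..k} without fixed points. *)
definition sign_array :: "int \<Rightarrow> int \<Rightarrow> int \<Rightarrow> int" where
  "sign_array k i j =
     (if i = 0 then j else if j = 0 then i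
      else sgn i * (if sgn i = sgn j then \<bar>j\<bar> else \<bar>j\<bar> mod k + 1))"

lemma latin_array_sign_array:
  fixes k :: int
  assumes "2 \<le> k"
  shows "latin_array uminus uminus {-k..k} {-k..k} {-k..k} (sign_array k)"
proof -
  have shift: "1 \<le> a mod k + 1" "a mod k + 1 \<le> k" "a mod k + 1 \<noteq> a" if "1 \<le> a" "a \<le> k" for a
  proof -
    have "0 \<le> a mod k" "a mod k < k" using assms by simp_all
    then show "1 \<le> a mod k + 1" "a mod k + 1 \<le> k" by linarith+
    show "a mod k + 1 \<noteq> a"
      using that assms by (cases "a = k") auto
  qed
  have row_sign: "sgn (sign_array k i j) = sgn i" if "i \<noteq> 0" "j \<in> {-k..k}" for i j
    using that shift[of "\<bar>j\<bar>"] unfolding sign_array_def by (auto simp: sgn_mult)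
  have column: "sign_array k i j = j \<or> sign_array k i j = - sgn j * (\<bar>j\<bar> mod k + 1)"
    if "j \<noteq> 0" for i j
    using that unfolding sign_array_def by (auto simp: sgn_if)
  show ?thesis
  proof (rule latin_arrayI)
    fix i j :: int assume ij: "i \<in> {-k..k}" "j \<in> {-k..k}"
    have signed: "sgn i * s \<in> {-k..k}" if "0 \<le> s" "s \<le> k" for s
      using that by (auto simp: sgn_if)
    show "sign_array k i j \<in> {-k..k}"
    proof (cases "i = 0 \<or> j = 0")
      case False
      then have "1 \<le> \<bar>j\<bar>" "\<bar>j\<bar> \<le> k" using ij by auto
      then show ?thesis
        using False shift[of "\<bar>j\<bar>"] signed unfolding sign_array_def by simp
    qed (use ij in \<open>auto simp: sign_array_def\<close>)
  next
    fix i j1 j2 :: int assume j: "j1 \<in> {-k..k}" "j2 \<in> {-k..k}" and ne: "(i, j1) \<noteq> (- i, j2)"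
    show "sign_array k i j1 \<noteq> sign_array k (- i) j2"
    proof (cases "i = 0")
      case False
      then have "sgn (sign_array k i j1) \<noteq> sgn (sign_array k (- i) j2)"
        using row_sign[OF _ j(1)] row_sign[OF _ j(2)] by (simp add: sgn_if)
      then show ?thesis by metis
    qed (use ne in \<open>simp add: sign_array_def\<close>)
  next
    fix i1 i2 j :: int assume j: "j \<in> {-k..k}" and ne: "(i1, j) \<noteq> (i2, - j)"
    show "sign_array k i1 j \<noteq> sign_array k i2 (- j)"
    proof (cases "j = 0")
      case False
      define s where "s = \<bar>j\<bar> mod k + 1"
      have "1 \<le> \<bar>j\<bar>" "\<bar>j\<bar> \<le> k" using j False by auto
      then have s: "1 \<le> s" "s \<noteq> \<bar>j\<bar>" using shift unfolding s_def by auto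
      then have "\<bar>sgn j * s\<bar> = s" using False by (simp add: abs_mult)
      with s have s_ne: "sgn j * s \<noteq> j" "sgn j * s \<noteq> 0" by auto
      have "sign_array k i1 j = j \<or> sign_array k i1 j = - sgn j * s"
        using column[OF False] unfolding s_def .
      moreover have "sign_array k i2 (- j) = - j \<or> sign_array k i2 (- j) = sgn j * s"
        using column[of "- j" i2] False unfolding s_def by simp
      ultimately show ?thesis using False s_ne by (elim disjE) simp_all
    qed (use ne in \<open>simp add: sign_array_def\<close>)
  qed
qed

definition array_3x3 :: "int \<Rightarrow> int \<Rightarrow> int" where
  "array_3x3 i j = (if i = 0 then j else if j = 0 then i else if i = j then i else if i = 1 then 0 else 2)"

lemma latin_array_3x3: "latin_array uminus uminus {-1..1} {-1..1} {-1..2} array_3x3"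
proof -
  have "{-1..1::int} = {-1, 0, 1}" "{-1..2::int} = {-1, 0, 1, 2}" by auto
  then show ?thesis unfolding latin_array_def array_3x3_def by simp
qed

section \<open>Latin-sum arrays over finite fields\<close>

lemma latin_sum_colourable_char_two_char_two:
  assumes two_a: "(2::'a::{finite,field}) = 0" and two_b: "(2::'b::{finite,field}) = 0"
    and le: "CARD('a) \<le> CARD('b)"
  shows "latin_sum_colourable (UNIV::'a set) (UNIV::'b set) CARD('b)"
proof -
  define I where "I = {0..<int CARD('b)}"
  have I: "finite I" "card I = CARD('b)" unfolding I_def by simp_all
  obtain \<alpha> :: "'a \<Rightarrow> int" where \<alpha>: "range \<alpha> \<subseteq> I" "inj \<alpha>"
    using card_le_inj[of "UNIV::'a set" I] le I unfolding I_def by auto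
  obtain \<beta> :: "'b \<Rightarrow> int" where \<beta>: "range \<beta> \<subseteq> I" "inj \<beta>"
    using card_le_inj[of "UNIV::'b set" I] I unfolding I_def by auto
  have "latin_array id id I I I (\<lambda>i j. (i + j) mod int CARD('b))"
    unfolding I_def by (rule latin_array_cyclic) simp
  then show ?thesis
    by (rule latin_sum_colourable_via_embeddings[where \<alpha> = \<alpha> and \<beta> = \<beta>])
      (simp_all add: I \<alpha> \<beta> uminus_eq_self_if_two_eq_zero[OF two_a]
        uminus_eq_self_if_two_eq_zero[OF two_b])
qed

lemma latin_sum_colourable_char_two_odd:
  assumes two_a: "(2::'a::{finite,field}) = 0" and two_b: "(2::'b::{finite,field}) \<noteq> 0"
    and le: "CARD('a) \<le> CARD('b)"
  shows "latin_sum_colourable (UNIV::'a set) (UNIV::'b set) CARD('b)"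
proof -
  obtain k and \<beta> :: "'b \<Rightarrow> int" where n: "CARD('b) = 2 * k + 1"
    and \<beta>: "inj \<beta>" "range \<beta> \<subseteq> {- int k..int k}" "\<And>y. \<beta> (- y) = - \<beta> y"
    using odd_char_embedding[OF two_b] by blast
  have "even CARD('a)" by (rule even_card_if_two_eq_zero[OF two_a])
  then have m: "CARD('a) \<le> 2 * k" using le n by presburger
  have k: "1 \<le> k" using two_le_card_UNIV[where 'a = 'b] n by simp
  define R where "R = {- int k..int k} - {-1}"
  have "card R = 2 * k" using k unfolding R_def by simp
  then obtain \<alpha> :: "'a \<Rightarrow> int" where \<alpha>: "range \<alpha> \<subseteq> R" "inj \<alpha>"
    using card_le_inj[of "UNIV::'a set" R] m unfolding R_def by auto
  have "latin_array id uminus R {- int k..int k} {- int k..int k} cycle_array"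
    unfolding R_def by (rule latin_array_cycle_array) (use k in simp)
  then show ?thesis
    by (rule latin_sum_colourable_via_embeddings[where \<alpha> = \<alpha> and \<beta> = \<beta>])
      (simp_all add: n \<alpha> \<beta> uminus_eq_self_if_two_eq_zero[OF two_a])
qed

lemma latin_sum_colourable_odd_char_two:
  assumes two_a: "(2::'a::{finite,field}) \<noteq> 0" and two_b: "(2::'b::{finite,field}) = 0"
    and le: "CARD('a) \<le> CARD('b)"
  shows "latin_sum_colourable (UNIV::'a set) (UNIV::'b set) CARD('b)"
proof -
  obtain t and \<alpha> :: "'a \<Rightarrow> int" where m: "CARD('a) = 2 * t + 1"
    and \<alpha>: "inj \<alpha>" "range \<alpha> \<subseteq> {- int t..int t}" "\<And>x. \<alpha> (- x) = - \<alpha> x"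
    using odd_char_embedding[OF two_a] by blast
  obtain h where n: "CARD('b) = 2 * h"
    using even_card_if_two_eq_zero[OF two_b] by blast
  have "t < h" using le m n by simp
  then have "{- int t..int t} \<subseteq> {- int h<..<int h}" by auto
  with \<alpha>(2) have \<alpha>_range: "range \<alpha> \<subseteq> {- int h<..<int h}" by (rule order.trans)
  have "card {0..<2 * int h} = CARD('b)" using n by simp
  then obtain \<beta> :: "'b \<Rightarrow> int" where \<beta>: "range \<beta> \<subseteq> {0..<2 * int h}" "inj \<beta>"
    using card_le_inj[of "UNIV::'b set" "{0..<2 * int h}"] by auto
  have "latin_array uminus id {- int h<..<int h} {0..<2 * int h} {0..<2 * int h} (parity_array (int h))"
    by (rule latin_array_parity_array) (use \<open>t < h\<close> in simp)
  then show ?thesis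
    by (rule latin_sum_colourable_via_embeddings[where \<alpha> = \<alpha> and \<beta> = \<beta>])
      (simp_all add: n \<alpha> \<alpha>_range \<beta> uminus_eq_self_if_two_eq_zero[OF two_b])
qed

lemma latin_sum_colourable_odd_odd:
  assumes two_a: "(2::'a::{finite,field}) \<noteq> 0" and two_b: "(2::'b::{finite,field}) \<noteq> 0"
    and le: "CARD('a) \<le> CARD('b)" and not_3x3: "\<not> (CARD('a) = 3 \<and> CARD('b) = 3)"
  shows "latin_sum_colourable (UNIV::'a set) (UNIV::'b set) CARD('b)"
proof -
  obtain t and \<alpha> :: "'a \<Rightarrow> int" where m: "CARD('a) = 2 * t + 1"
    and \<alpha>: "inj \<alpha>" "range \<alpha> \<subseteq> {- int t..int t}" "\<And>x. \<alpha> (- x) = - \<alpha> x"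
    using odd_char_embedding[OF two_a] by blast
  obtain k and \<beta> :: "'b \<Rightarrow> int" where n: "CARD('b) = 2 * k + 1"
    and \<beta>: "inj \<beta>" "range \<beta> \<subseteq> {- int k..int k}" "\<And>y. \<beta> (- y) = - \<beta> y"
    using odd_char_embedding[OF two_b] by blast
  have "1 \<le> t" using two_le_card_UNIV[where 'a = 'a] m by simp
  moreover have "t \<le> k" using le m n by simp
  ultimately have k: "2 \<le> k" using not_3x3 m n by auto
  from \<open>t \<le> k\<close> have "{- int t..int t} \<subseteq> {- int k..int k}" by auto
  with \<alpha>(2) have \<alpha>_range: "range \<alpha> \<subseteq> {- int k..int k}" by (rule order.trans)
  have "latin_array uminus uminus {- int k..int k} {- int k..int k} {- int k..int k} (sign_array (int k))"
    by (rule latin_array_sign_array) (use k in simp)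
  then show ?thesis
    by (rule latin_sum_colourable_via_embeddings[where \<alpha> = \<alpha> and \<beta> = \<beta>])
      (simp_all add: n \<alpha> \<alpha>_range \<beta>)
qed

lemma latin_sum_colourable_3x3:
  assumes three: "CARD('a::{finite,field}) = 3" "CARD('b::{finite,field}) = 3"
  shows "latin_sum_colourable (UNIV::'a set) (UNIV::'b set) 4"
proof -
  have two: "(2::'a) \<noteq> 0" "(2::'b) \<noteq> 0"
    using even_card_if_two_eq_zero[where 'a = 'a] even_card_if_two_eq_zero[where 'a = 'b] three by auto
  obtain t and \<alpha> :: "'a \<Rightarrow> int" where m: "CARD('a) = 2 * t + 1"
    and \<alpha>: "inj \<alpha>" "range \<alpha> \<subseteq> {- int t..int t}" "\<And>x. \<alpha> (- x) = - \<alpha> x"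
    using odd_char_embedding[OF two(1)] by blast
  obtain u and \<beta> :: "'b \<Rightarrow> int" where n: "CARD('b) = 2 * u + 1"
    and \<beta>: "inj \<beta>" "range \<beta> \<subseteq> {- int u..int u}" "\<And>y. \<beta> (- y) = - \<beta> y"
    using odd_char_embedding[OF two(2)] by blast
  have "t = 1" "u = 1" using m n three by simp_all
  then have "range \<alpha> \<subseteq> {-1..1}" "range \<beta> \<subseteq> {-1..1}" using \<alpha>(2) \<beta>(2) by simp_all
  then show ?thesis
    by (intro latin_sum_colourable_via_embeddings[OF latin_array_3x3, where \<alpha> = \<alpha> and \<beta> = \<beta>])
      (simp_all add: \<alpha> \<beta>)
qed

lemma latin_sum_colourable_UNIV:
  assumes "CARD('a::{finite,field}) \<le> CARD('b::{finite,field})"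
    and "\<not> (CARD('a) = 3 \<and> CARD('b) = 3)"
  shows "latin_sum_colourable (UNIV::'a set) (UNIV::'b set) CARD('b)"
proof (cases "(2::'a) = 0"; cases "(2::'b) = 0")
  assume "(2::'a) = 0" "(2::'b) = 0"
  then show ?thesis using assms(1) by (rule latin_sum_colourable_char_two_char_two)
next
  assume "(2::'a) = 0" "(2::'b) \<noteq> 0"
  then show ?thesis using assms(1) by (rule latin_sum_colourable_char_two_odd)
next
  assume "(2::'a) \<noteq> 0" "(2::'b) = 0"
  then show ?thesis using assms(1) by (rule latin_sum_colourable_odd_char_two)
next
  assume "(2::'a) \<noteq> 0" "(2::'b) \<noteq> 0"
  then show ?thesis using assms by (rule latin_sum_colourable_odd_odd)
qed

theorem lemma11:
  assumes "card (UNIV::'a::{finite,field} set) \<le> card (UNIV::'b::{finite,field} set)"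
  shows "\<exists>(C::nat set) (L::'a \<Rightarrow> 'b \<Rightarrow> nat).
           finite C \<and>
           card C = (if card (UNIV::'a set) = 3 \<and> card (UNIV::'b set) = 3 then 4
                     else card (UNIV::'b set)) \<and>
           latin_sum_array (UNIV::'a set) (UNIV::'b set) C L"
proof -
  have "latin_sum_colourable (UNIV::'a set) (UNIV::'b set)
          (if CARD('a) = 3 \<and> CARD('b) = 3 then 4 else CARD('b))"
    using latin_sum_colourable_3x3[where 'a = 'a and 'b = 'b]
      latin_sum_colourable_UNIV[OF assms] by simp
  then show ?thesis unfolding latin_sum_colourable_def .
qed

end
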